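(* Let $\mathcal H$ be a complex Hilbert space of finite dimension, let $\hat H=\sum_{r=1}^DE_r\hat P_r$ be a Hermitian operator with distinct eigenvalues $E_1,\dots,E_D$ and eigenprojections $\hat P_r$, let $\hat\rho_0$ be a density matrix on $\mathcal H$, set $p_r=\mathrm{tr}\,\hat\rho_0\hat P_r$, and let $\hbar>0$, $\sigma>0$. On a probability space $(\Omega,\mathcal F,\mathbb P)$ let $\{B_t\}$ be a standard Brownian motion and $H$ an independent random variable with $\mathbb P[H=E_r]=p_r$. Let $\xi_t=\sigma tH+B_t$, let $\{\mathcal F_t\}$ be the filtration generated by $\{\xi_t\}$, $\mathbb E_t[\cdot]=\mathbb E[\cdot|\mathcal F_t]$, and define $$\hat K_t=\exp\Big[-\mathrm i\hbar^{-1}\hat Ht+\tfrac12\sigma\hat H\xi_t-\tfrac14\sigma^2\hat H^2t\Big],\qquad \hat\rho_t=\frac{\hat K_t\hat\rho_0\hat K_t^*}{\mathrm{tr}[\hat K_t\hat\rho_0\hat K_t^*]},$$ and for $n\neq m$ $$\Phi_{nm\,t}=\frac{\exp[\frac12\sigma(E_n+E_m)\xi_t-\frac18\sigma^2(E_n+E_m)^2t]}{\sum_{r=1}^Dp_r\exp[\sigma E_r\xi_t-\frac12\sigma^2E_r^2t]}\exp\big[-\tfrac18\sigma^2(E_n-E_m)^2t\big].$$ Then $$\hat\rho_t=\sum_{n:\,p_n>0}\mathbb E_t[\mathds 1(H=E_n)]\frac{\hat P_n\hat\rho_0\hat P_n}{\mathrm{tr}\,\hat\rho_0\hat P_n}+\sum_{n,m=1,\;n\neq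 m}^D\hat P_n\hat\rho_0\hat P_m\exp[-\mathrm i\hbar^{-1}(E_n-E_m)t]\,\Phi_{nm\,t}.$$
   Context: $\mathds 1(\cdot)$ denotes the indicator function. *)

theory Defs
  imports "HOL-Analysis.Analysis" "HOL-Probability.Probability"
begin

text \<open>The Hilbert space is complex^'n for a finite type 'n (standard inner product
  sum_i cnj (x i) * y i); operators are complex matrices complex^'n^'n.\<close>

definition cscale :: "complex \<Rightarrow> complex^'n^'n \<Rightarrow> complex^'n^'n" where
  "cscale c A = (\<chi> i j. c * A$i$j)"

definition adjoint_mat :: "complex^'n^'n \<Rightarrow> complex^'n^'n" where
  "adjoint_mat A = (\<chi> i j. cnj (A$j$i))"

definition hermitian_mat :: "complex^'n^'n \<Rightarrow> bool" where
  "hermitian_mat A \<longleftrightarrow> adjoint_mat A = A"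

definition cinner :: "complex^'n \<Rightarrow> complex^'n \<Rightarrow> complex" where
  "cinner x y = (\<Sum>i\<in>UNIV. cnj (x$i) * y$i)"

definition density_matrix :: "complex^'n^'n \<Rightarrow> bool" where
  "density_matrix \<rho> \<longleftrightarrow> hermitian_mat \<rho> \<and>
     (\<forall>x. Im (cinner x (\<rho> *v x)) = 0 \<and> Re (cinner x (\<rho> *v x)) \<ge> 0) \<and> trace \<rho> = 1"

definition orth_proj :: "complex^'n^'n \<Rightarrow> bool" where
  "orth_proj P \<longleftrightarrow> P ** P = P \<and> hermitian_mat P"

definition mpow :: "complex^'n^'n \<Rightarrow> nat \<Rightarrow> complex^'n^'n" where
  "mpow A k = ((\<lambda>B. A ** B) ^^ k) (mat 1)"

definition mexp :: "complex^'n^'n \<Rightarrow> complex^'n^'n" where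
  "mexp A = (\<Sum>k. cscale (complex_of_real (1 / fact k)) (mpow A k))"

definition std_brownian_motion :: "'a measure \<Rightarrow> (real \<Rightarrow> 'a \<Rightarrow> real) \<Rightarrow> bool" where
  "std_brownian_motion M B \<longleftrightarrow>
     prob_space M \<and>
     (\<forall>t\<ge>0. B t \<in> borel_measurable M) \<and>
     (\<forall>\<omega>\<in>space M. B 0 \<omega> = 0) \<and>
     (\<forall>\<omega>\<in>space M. continuous_on {0..} (\<lambda>t. B t \<omega>)) \<and>
     (\<forall>s t. 0 \<le> s \<longrightarrow> s < t \<longrightarrow>
        distributed M lborel (\<lambda>\<omega>. B t \<omega> - B s \<omega>) (normal_density 0 (sqrt (t - s)))) \<and>
     (\<forall>(ts::nat \<Rightarrow> real) k. 0 \<le> ts 0 \<longrightarrow> (\<forall>i<k. ts i < ts (Suc i)) \<longrightarrow>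
        prob_space.indep_vars M (\<lambda>_. borel) (\<lambda>i \<omega>. B (ts (Suc i)) \<omega> - B (ts i) \<omega>) {..<k})"

definition gen_filtration :: "'a measure \<Rightarrow> (real \<Rightarrow> 'a \<Rightarrow> real) \<Rightarrow> real \<Rightarrow> 'a measure" where
  "gen_filtration M \<xi> t =
     sigma (space M) {\<xi> s -` A \<inter> space M | s A. s \<in> {0..t} \<and> A \<in> sets borel}"

end

theory Submission
  imports Defs
begin

text \<open>Being a function of the Hamiltonian, \<open>K t\<close> is diagonal in the eigenprojections:
  \<open>K t = \<Sum>r. k r \<cdot> P r\<close> with \<open>k r = exp (- \<i> E r t / hbar + \<sigma> E r \<xi> t / 2 - \<sigma>\<^sup>2 (E r)\<^sup>2 t / 4)\<close>.
  Hence \<open>\<rho> t = \<Sum>n m. k n cnj (k m) \<cdot> P n \<rho>0 P m / Z\<close> with \<open>Z = \<Sum>r. p r \<bar>k r\<bar>\<^sup>2\<close>, and the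
  off-diagonal coefficients are the \<open>\<Phi>\<close> terms as they stand.  On the diagonal,
  \<open>p n \<bar>k n\<bar>\<^sup>2 / Z = p n w n (\<xi> t) / \<Sum>r. p r w r (\<xi> t)\<close> with
  \<open>w r x = exp (\<sigma> E r x - \<sigma>\<^sup>2 (E r)\<^sup>2 t / 2)\<close>, which is Bayes' formula for the conditional
  probability of \<open>H = E n\<close> given the observed path: given \<open>H = E r\<close>, \<open>\<xi>\<close> is a Brownian motion
  with drift \<open>\<sigma> E r\<close>, whose finite-dimensional laws have density \<open>w r (B t)\<close> with respect to
  those of \<open>B\<close> (Cameron--Martin), and \<open>H\<close> is independent of \<open>B\<close>.  It suffices to check the
  formula on cylinder events of the path, an \<open>\<inter>\<close>-stable generator of the observation
  \<open>\<sigma>\<close>-algebra.\<close>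

lemma cscale_nth [simp]: "cscale c A $ i $ j = c * A $ i $ j"
  by (simp add: cscale_def)

lemma cscale_one [simp]: "cscale 1 A = A"
  by (simp add: vec_eq_iff)

lemma cscale_0_right [simp]: "cscale z 0 = 0"
  by (simp add: vec_eq_iff)

lemma cscale_cscale: "cscale a (cscale b A) = cscale (a * b) A"
  by (simp add: vec_eq_iff mult.assoc)

lemma cscale_add_left: "cscale (a + b) A = cscale a A + cscale b A"
  by (simp add: vec_eq_iff algebra_simps)

lemma cscale_diff_left: "cscale (a - b) A = cscale a A - cscale b A"
  by (simp add: vec_eq_iff algebra_simps)

lemma cscale_sum_right: "cscale z (\<Sum>r\<in>S. A r) = (\<Sum>r\<in>S. cscale z (A r))"
  by (induction S rule: infinite_finite_induct) (auto simp: vec_eq_iff algebra_simps)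

lemma bounded_linear_cscale_left: "bounded_linear (\<lambda>z. cscale z A)"
  by (rule linear_conv_bounded_linear[THEN iffD1], rule linearI)
     (simp_all add: cscale_add_left vec_eq_iff)

lemma matrix_mul_cscale_left: "cscale z A ** B = cscale z (A ** B)"
  by (simp add: vec_eq_iff matrix_matrix_mult_def sum_distrib_left mult.assoc)

lemma matrix_mul_cscale_right: "A ** cscale z B = cscale z (A ** B)"
  by (simp add: vec_eq_iff matrix_matrix_mult_def sum_distrib_left algebra_simps)

lemma matrix_add_rdistrib: "(B + C) ** (A :: complex^'n^'n) = B ** A + C ** A"
  by (simp add: vec_eq_iff matrix_matrix_mult_def sum.distrib[symmetric] algebra_simps)

lemma matrix_mul_sum_left: "(\<Sum>r\<in>S. A r) ** (B :: complex^'n^'n) = (\<Sum>r\<in>S. A r ** B)"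
  by (induction S rule: infinite_finite_induct) (auto simp: matrix_add_rdistrib)

lemma matrix_mul_sum_right: "(B :: complex^'n^'n) ** (\<Sum>r\<in>S. A r) = (\<Sum>r\<in>S. B ** A r)"
  by (induction S rule: infinite_finite_induct) (auto simp: matrix_add_ldistrib)

lemma trace_cscale: "trace (cscale z A) = z * trace A"
  by (simp add: trace_def sum_distrib_left)

lemma trace_sum: "trace (\<Sum>r\<in>S. (A r :: complex^'n^'n)) = (\<Sum>r\<in>S. trace (A r))"
  by (induction S rule: infinite_finite_induct) (auto simp: trace_def sum.distrib)

lemma adjoint_mat_sum: "adjoint_mat (\<Sum>r\<in>S. A r) = (\<Sum>r\<in>S. adjoint_mat (A r))"
  by (induction S rule: infinite_finite_induct) (auto simp: adjoint_mat_def vec_eq_iff)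

lemma adjoint_mat_cscale: "adjoint_mat (cscale z A) = cscale (cnj z) (adjoint_mat A)"
  by (simp add: adjoint_mat_def vec_eq_iff)

lemma adjoint_mat_mul: "adjoint_mat (A ** B) = adjoint_mat B ** adjoint_mat A"
  by (simp add: adjoint_mat_def vec_eq_iff matrix_matrix_mult_def mult.commute)

lemma trace_adjoint_mat: "trace (adjoint_mat A) = cnj (trace A)"
  by (simp add: adjoint_mat_def trace_def)

lemma trace_hermitian_mul_real:
  assumes "hermitian_mat A" "hermitian_mat B"
  shows "trace (A ** B) = complex_of_real (Re (trace (A ** B)))"
proof -
  have "cnj (trace (A ** B)) = trace (B ** A)"
    using assms by (simp only: trace_adjoint_mat[symmetric] adjoint_mat_mul hermitian_mat_def)
  also have "\<dots> = trace (A ** B)"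
    by (rule trace_mul_sym)
  finally show ?thesis
    by (simp add: complex_eq_iff)
qed

lemma cinner_hermitian_mult_right:
  assumes "adjoint_mat A = A"
  shows "cinner x (A *v y) = cinner (A *v x) y"
proof -
  have A: "cnj (A$b$a) = A$a$b" for a b
    using assms unfolding adjoint_mat_def vec_eq_iff by simp
  have "cinner x (A *v y) = (\<Sum>a\<in>UNIV. \<Sum>b\<in>UNIV. cnj (x$a) * A$a$b * y$b)"
    by (simp add: cinner_def matrix_vector_mult_def sum_distrib_left mult.assoc)
  also have "\<dots> = (\<Sum>b\<in>UNIV. \<Sum>a\<in>UNIV. cnj (x$a) * A$a$b * y$b)"
    by (rule sum.swap)
  also have "\<dots> = (\<Sum>b\<in>UNIV. \<Sum>a\<in>UNIV. cnj (A$b$a * x$a) * y$b)"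
    by (simp add: A mult.commute)
  also have "\<dots> = cinner (A *v x) y"
    by (simp add: cinner_def matrix_vector_mult_def sum_distrib_right)
  finally show ?thesis .
qed

lemma cinner_two_point_form:
  fixes A :: "complex^'n^'n" and z :: complex
  assumes "i \<noteq> j"
  defines "x \<equiv> \<chi> a. (if a = i then 1 else 0) + (if a = j then z else 0)"
  shows "cinner x (A *v x) = A$i$i + A$i$j * z + cnj z * (A$j$i + A$j$j * z)"
proof -
  have Ax: "(A *v x) $ c = A$c$i + A$c$j * z" for c
  proof -
    have "A$c$b * x$b = (if b = i then A$c$i else 0) + (if b = j then A$c$j * z else 0)" for b
      using assms by (auto simp: x_def)
    then show ?thesis by (simp add: matrix_vector_mult_def sum.distrib)
  qed
  have "cnj (x$b) * (A *v x)$b = (if b = i then (A *v x)$i else 0) + (if b = j then cnj z * (A *v x)$j else 0)" for b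
    using assms by (auto simp: x_def)
  then show ?thesis by (simp add: cinner_def sum.distrib Ax)
qed

text \<open>An off-diagonal entry \<open>a\<close> of a positive semidefinite matrix with vanishing diagonal
  would make the quadratic form negative at \<open>e\<^sub>i - cnj a e\<^sub>j\<close>.\<close>
lemma psd_zero_diagonal_eq_0:
  fixes A :: "complex^'n^'n"
  assumes herm: "hermitian_mat A"
    and pos: "\<And>x. Re (cinner x (A *v x)) \<ge> 0"
    and diag: "\<And>i. A$i$i = 0"
  shows "A = 0"
proof -
  have "A$i$j = 0" for i j
  proof (cases "i = j")
    case False
    have Aji: "A$j$i = cnj (A$i$j)"
      using herm unfolding hermitian_mat_def adjoint_mat_def by (metis vec_lambda_beta)
    let ?x = "\<chi> a. (if a = i then 1 else 0) + (if a = j then - cnj (A$i$j) else 0)"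
    have "cinner ?x (A *v ?x) = - 2 * complex_of_real ((cmod (A$i$j))\<^sup>2)"
      using False by (simp add: cinner_two_point_form diag Aji) (metis complex_norm_square of_real_power)
    then show ?thesis using pos[of ?x] by simp
  qed (simp add: diag)
  then show ?thesis by (simp add: vec_eq_iff)
qed

lemma density_matrix_proj_sandwich_eq_0:
  assumes dens: "density_matrix \<rho>" and P: "orth_proj P"
    and tr: "Re (trace (\<rho> ** P)) = 0"
  shows "P ** \<rho> ** P = 0"
proof -
  let ?A = "P ** \<rho> ** P"
  have hP: "adjoint_mat P = P" and iP: "P ** P = P"
    using P by (auto simp: orth_proj_def hermitian_mat_def)
  have h\<rho>: "hermitian_mat \<rho>" using dens by (simp add: density_matrix_def)
  have hA: "hermitian_mat ?A"
    using h\<rho> by (simp add: hermitian_mat_def adjoint_mat_mul hP matrix_mul_assoc)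
  have quad: "cinner x (?A *v x) = cinner (P *v x) (\<rho> *v (P *v x))" for x
    by (simp add: matrix_vector_mul_assoc[symmetric] cinner_hermitian_mult_right[OF hP])
  have pos: "Re (cinner x (?A *v x)) \<ge> 0" and im: "Im (cinner x (?A *v x)) = 0" for x
    using dens unfolding quad density_matrix_def by auto
  have diag_quad: "?A$i$i = cinner (axis i 1) (?A *v axis i 1)" for i
    by (simp add: cinner_def matrix_vector_mult_def axis_def if_distrib[of cnj] mult_delta_left
        mult_delta_right cong: if_cong)
  have "trace ?A = trace (\<rho> ** P)"
    by (metis iP matrix_mul_assoc trace_mul_sym)
  also have "\<dots> = 0"
    using trace_hermitian_mul_real[OF h\<rho>, of P] P tr by (simp add: orth_proj_def)
  finally have "(\<Sum>i\<in>UNIV. Re (?A$i$i)) = 0"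
    by (simp add: trace_def Re_sum[symmetric])
  then have "Re (?A$i$i) = 0" for i
    using pos diag_quad by (simp add: sum_nonneg_eq_0_iff)
  then have "?A$i$i = 0" for i
    using im diag_quad by (simp add: complex_eq_iff)
  then show ?thesis by (rule psd_zero_diagonal_eq_0[OF hA pos])
qed

section \<open>Functional calculus for a spectral family\<close>

locale spectral_family =
  fixes D :: nat and P :: "nat \<Rightarrow> complex^'n^'n"
  assumes proj: "\<And>r. r \<in> {1..D} \<Longrightarrow> orth_proj (P r) \<and> P r \<noteq> 0"
    and orth: "\<And>r s. r \<in> {1..D} \<Longrightarrow> s \<in> {1..D} \<Longrightarrow> r \<noteq> s \<Longrightarrow> P r ** P s = 0"
    and complete: "(\<Sum>r=1..D. P r) = mat 1"
begin

lemma proj_idem: "r \<in> {1..D} \<Longrightarrow> P r ** P r = P r"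
  using proj by (auto simp: orth_proj_def)

lemma adjoint_mat_proj: "r \<in> {1..D} \<Longrightarrow> adjoint_mat (P r) = P r"
  using proj by (auto simp: orth_proj_def hermitian_mat_def)

lemma spectral_sum_mult_proj:
  assumes "s \<in> {1..D}"
  shows "(\<Sum>r=1..D. cscale (a r) (P r)) ** P s = cscale (a s) (P s)"
proof -
  have "(\<Sum>r=1..D. cscale (a r) (P r)) ** P s = (\<Sum>r=1..D. cscale (a r) (P r ** P s))"
    by (simp add: matrix_mul_sum_left matrix_mul_cscale_left)
  also have "\<dots> = cscale (a s) (P s ** P s)"
    by (subst sum.remove[of _ s]) (use assms orth in auto)
  finally show ?thesis
    using proj_idem assms by simp
qed

lemma spectral_sum_mult:
  "(\<Sum>r=1..D. cscale (a r) (P r)) ** (\<Sum>r=1..D. cscale (b r) (P r)) =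
   (\<Sum>r=1..D. cscale (a r * b r) (P r))"
proof -
  have "(\<Sum>r=1..D. cscale (a r) (P r)) ** (\<Sum>r=1..D. cscale (b r) (P r)) =
        (\<Sum>s=1..D. cscale (b s) ((\<Sum>r=1..D. cscale (a r) (P r)) ** P s))"
    by (simp add: matrix_mul_sum_right matrix_mul_cscale_right)
  also have "\<dots> = (\<Sum>s=1..D. cscale (a s * b s) (P s))"
    by (rule sum.cong) (simp, metis spectral_sum_mult_proj cscale_cscale mult.commute)
  finally show ?thesis .
qed

lemma mpow_spectral_sum:
  "mpow (\<Sum>r=1..D. cscale (c r) (P r)) k = (\<Sum>r=1..D. cscale (c r ^ k) (P r))"
proof (induction k)
  case 0
  then show ?case
    using complete by (simp add: mpow_def)
next
  case (Suc k)
  have "mpow (\<Sum>r=1..D. cscale (c r) (P r)) (Suc k) =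
        (\<Sum>r=1..D. cscale (c r) (P r)) ** mpow (\<Sum>r=1..D. cscale (c r) (P r)) k"
    by (simp add: mpow_def)
  also have "\<dots> = (\<Sum>r=1..D. cscale (c r * c r ^ k) (P r))"
    unfolding Suc.IH by (rule spectral_sum_mult)
  finally show ?case
    by simp
qed

lemma mexp_spectral_sum:
  "mexp (\<Sum>r=1..D. cscale (c r) (P r)) = (\<Sum>r=1..D. cscale (exp (c r)) (P r))"
proof -
  have series_term: "cscale (complex_of_real (1 / fact k)) (mpow (\<Sum>r=1..D. cscale (c r) (P r)) k) =
              (\<Sum>r=1..D. cscale (c r ^ k /\<^sub>R fact k) (P r))" for k
    unfolding mpow_spectral_sum cscale_sum_right cscale_cscale
    by (intro sum.cong refl) (simp add: scaleR_conv_of_real divide_inverse mult.commute del: of_real_divide)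
  have "(\<lambda>k. \<Sum>r=1..D. cscale (c r ^ k /\<^sub>R fact k) (P r)) sums (\<Sum>r=1..D. cscale (exp (c r)) (P r))"
    by (intro sums_sum bounded_linear.sums[OF bounded_linear_cscale_left] exp_converges)
  then show ?thesis
    unfolding mexp_def series_term by (rule sums_unique[symmetric])
qed

lemma mexp_quadratic_spectral:
  assumes "A = (\<Sum>r=1..D. cscale (complex_of_real (E r)) (P r))"
  shows "mexp (cscale \<alpha> A + cscale \<beta> A - cscale \<gamma> (A ** A)) =
         (\<Sum>r=1..D. cscale (exp (\<alpha> * E r + \<beta> * E r - \<gamma> * E r ^ 2)) (P r))"
proof -
  have "cscale \<alpha> A + cscale \<beta> A - cscale \<gamma> (A ** A) =
        (\<Sum>r=1..D. cscale (\<alpha> * E r + \<beta> * E r - \<gamma> * E r ^ 2) (P r))"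
    unfolding assms spectral_sum_mult
    by (simp only: cscale_sum_right cscale_cscale sum.distrib[symmetric] sum_subtractf[symmetric]
        cscale_add_left[symmetric] cscale_diff_left[symmetric])
       (simp add: power2_eq_square)
  then show ?thesis
    by (simp only: mexp_spectral_sum)
qed

lemma spectral_sandwich:
  "(\<Sum>n=1..D. cscale (a n) (P n)) ** R ** (\<Sum>m=1..D. cscale (b m) (P m)) =
   (\<Sum>n=1..D. \<Sum>m=1..D. cscale (a n * b m) (P n ** R ** P m))"
  by (simp only: matrix_mul_sum_left matrix_mul_sum_right matrix_mul_cscale_left
      matrix_mul_cscale_right cscale_sum_right cscale_cscale)
     (subst sum.swap, simp only: mult.commute)

lemma trace_proj_sandwich:
  assumes "n \<in> {1..D}" "m \<in> {1..D}"
  shows "trace (P n ** R ** P m) = (if n = m then trace (R ** P n) else 0)"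
proof -
  have "trace (P n ** R ** P m) = trace ((P m ** P n) ** R)"
    by (metis trace_mul_sym matrix_mul_assoc)
  moreover have "trace (P n ** R) = trace (R ** P n)"
    by (rule trace_mul_sym)
  ultimately show ?thesis
    using proj_idem[OF assms(1)] orth[OF assms(2,1)] by (auto simp: trace_def)
qed

lemma density_matrix_trace_proj_sum:
  assumes "density_matrix \<rho>"
  shows "(\<Sum>r=1..D. Re (trace (\<rho> ** P r))) = 1"
proof -
  have "(\<Sum>r=1..D. trace (\<rho> ** P r)) = trace (\<rho> ** (\<Sum>r=1..D. P r))"
    by (simp only: matrix_mul_sum_right trace_sum)
  also have "\<dots> = 1"
    using complete assms by (simp add: density_matrix_def)
  finally show ?thesis
    by (simp add: Re_sum[symmetric])
qed

text \<open>Diagonal blocks with \<open>p n = 0\<close> drop out since then \<open>P n ** \<rho> ** P n = 0\<close>.\<close>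
lemma normalized_spectral_sandwich:
  assumes dens: "density_matrix \<rho>"
    and p_def: "\<And>r. p r = Re (trace (\<rho> ** P r))"
    and p_nonneg: "\<And>r. r \<in> {1..D} \<Longrightarrow> p r \<ge> 0"
    and K: "K = (\<Sum>r=1..D. cscale (k r) (P r))"
  defines "Z \<equiv> \<Sum>r=1..D. p r * (cmod (k r))\<^sup>2"
  shows "cscale (1 / trace (K ** \<rho> ** adjoint_mat K)) (K ** \<rho> ** adjoint_mat K) =
     (\<Sum>n\<in>{n\<in>{1..D}. p n > 0}.
        cscale (complex_of_real (p n * (cmod (k n))\<^sup>2 / Z) / trace (\<rho> ** P n)) (P n ** \<rho> ** P n))
   + (\<Sum>n=1..D. \<Sum>m\<in>{1..D} - {n}. cscale (k n * cnj (k m) / complex_of_real Z) (P n ** \<rho> ** P m))"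
proof -
  have trace_rho_P: "trace (\<rho> ** P r) = complex_of_real (p r)" if "r \<in> {1..D}" for r
    using trace_hermitian_mul_real[of \<rho> "P r"] dens proj[OF that] p_def
    by (simp add: density_matrix_def orth_proj_def)
  have norm_sq: "k n * cnj (k n) = complex_of_real ((cmod (k n))\<^sup>2)" for n
    by (rule complex_norm_square[symmetric])
  have sandwich: "K ** \<rho> ** adjoint_mat K =
                  (\<Sum>n=1..D. \<Sum>m=1..D. cscale (k n * cnj (k m)) (P n ** \<rho> ** P m))"
    unfolding K adjoint_mat_sum adjoint_mat_cscale
    by (subst sum.cong[OF refl adjoint_mat_proj[THEN arg_cong]], assumption) (rule spectral_sandwich)
  have "trace (K ** \<rho> ** adjoint_mat K) = (\<Sum>n=1..D. k n * cnj (k n) * trace (\<rho> ** P n))"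
    unfolding sandwich trace_sum trace_cscale
    by (intro sum.cong refl) (simp add: trace_proj_sandwich if_distrib cong: if_cong)
  also have "\<dots> = complex_of_real Z"
    by (simp add: Z_def norm_sq trace_rho_P mult.commute)
  finally have trace_K: "trace (K ** \<rho> ** adjoint_mat K) = complex_of_real Z" .
  define F where "F n m = cscale (k n * cnj (k m) / complex_of_real Z) (P n ** \<rho> ** P m)" for n m
  have "cscale (1 / trace (K ** \<rho> ** adjoint_mat K)) (K ** \<rho> ** adjoint_mat K) =
        (\<Sum>n=1..D. \<Sum>m=1..D. F n m)"
    unfolding trace_K unfolding sandwich F_def
    by (simp only: cscale_sum_right cscale_cscale) (simp add: field_simps)
  also have "\<dots> = (\<Sum>n=1..D. F n n + (\<Sum>m\<in>{1..D} - {n}. F n m))"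
    by (intro sum.cong refl) (simp add: sum.remove)
  also have "\<dots> = (\<Sum>n=1..D. F n n) + (\<Sum>n=1..D. \<Sum>m\<in>{1..D} - {n}. F n m)"
    by (simp only: sum.distrib)
  also have "(\<Sum>n=1..D. F n n) = (\<Sum>n\<in>{n\<in>{1..D}. p n > 0}. F n n)"
  proof (rule sum.mono_neutral_right)
    show "\<forall>n\<in>{1..D} - {n \<in> {1..D}. 0 < p n}. F n n = 0"
      using density_matrix_proj_sandwich_eq_0[OF dens] proj p_def p_nonneg
      by (force simp: F_def)
  qed auto
  also have "\<dots> = (\<Sum>n\<in>{n\<in>{1..D}. p n > 0}.
        cscale (complex_of_real (p n * (cmod (k n))\<^sup>2 / Z) / trace (\<rho> ** P n)) (P n ** \<rho> ** P n))"
    by (intro sum.cong refl) (simp add: F_def trace_rho_P norm_sq)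
  finally show ?thesis
    unfolding F_def .
qed

end

section \<open>Gaussian change of measure\<close>

lemma normal_density_exp_tilt:
  assumes "\<delta> > 0"
  shows "normal_density 0 (sqrt \<delta>) x * exp (c * x - c\<^sup>2 * \<delta> / 2) = normal_density (c * \<delta>) (sqrt \<delta>) x"
proof -
  have "- (x - 0)\<^sup>2 / (2 * (sqrt \<delta>)\<^sup>2) + (c * x - c\<^sup>2 * \<delta> / 2) = - (x - c * \<delta>)\<^sup>2 / (2 * (sqrt \<delta>)\<^sup>2)"
    using assms by (simp add: field_simps power2_eq_square)
  then show ?thesis
    unfolding normal_density_def by (simp only: mult.assoc exp_add[symmetric])
qed

lemma density_normal_exp_tilt:
  assumes "\<delta> > 0"
  shows "density (density lborel (normal_density 0 (sqrt \<delta>))) (\<lambda>x. ennreal (exp (c * x - c\<^sup>2 * \<delta> / 2))) =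
         density lborel (normal_density (c * \<delta>) (sqrt \<delta>))"
  by (subst density_density_eq)
     (auto simp: ennreal_mult'[symmetric] normal_density_exp_tilt[OF assms] normal_density_nonneg)

lemma indicator_PiE_eq_prod:
  assumes "y \<in> extensional I" "finite I"
  shows "indicator (Pi\<^sub>E I A) y = (\<Prod>i\<in>I. indicator (A i) (y i) :: ennreal)"
  using assms by (auto simp: indicator_def PiE_def Pi_def prod.neutral intro: prod_zero)

lemma density_PiM_prod:
  assumes I: "finite I"
    and N: "\<And>i. sigma_finite_measure (N i)"
    and Nf: "\<And>i. sigma_finite_measure (density (N i) (f i))"
    and f[measurable]: "\<And>i. f i \<in> borel_measurable (N i)"
  shows "density (Pi\<^sub>M I N) (\<lambda>y. \<Prod>i\<in>I. f i (y i)) = Pi\<^sub>M I (\<lambda>i. density (N i) (f i))"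
proof -
  interpret N: product_sigma_finite N
    using N by (simp add: product_sigma_finite_def)
  interpret Nf: product_sigma_finite "\<lambda>i. density (N i) (f i)"
    using Nf by (simp add: product_sigma_finite_def)
  have prod_meas[measurable]: "(\<lambda>y. \<Prod>i\<in>I. f i (y i)) \<in> borel_measurable (Pi\<^sub>M I N)"
    by measurable
  show ?thesis
  proof (rule Nf.PiM_eqI[OF I])
    show "sets (density (Pi\<^sub>M I N) (\<lambda>y. \<Prod>i\<in>I. f i (y i))) = sets (Pi\<^sub>M I (\<lambda>i. density (N i) (f i)))"
      by (simp cong: sets_PiM_cong)
  next
    fix A assume A: "\<And>i. i \<in> I \<Longrightarrow> A i \<in> sets (density (N i) (f i))"
    then have [measurable]: "A i \<in> sets (N i)" if "i \<in> I" for i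
      using that by simp
    have "emeasure (density (Pi\<^sub>M I N) (\<lambda>y. \<Prod>i\<in>I. f i (y i))) (Pi\<^sub>E I A) =
          (\<integral>\<^sup>+y. (\<Prod>i\<in>I. f i (y i)) * indicator (Pi\<^sub>E I A) y \<partial>Pi\<^sub>M I N)"
      using A by (intro emeasure_density) (auto intro: sets_PiM_I_finite I)
    also have "\<dots> = (\<integral>\<^sup>+y. (\<Prod>i\<in>I. f i (y i) * indicator (A i) (y i)) \<partial>Pi\<^sub>M I N)"
    proof (rule nn_integral_cong)
      fix y assume "y \<in> space (Pi\<^sub>M I N)"
      then have "y \<in> extensional I"
        by (simp add: space_PiM PiE_def)
      then show "(\<Prod>i\<in>I. f i (y i)) * indicator (Pi\<^sub>E I A) y = (\<Prod>i\<in>I. f i (y i) * indicator (A i) (y i))"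
        by (simp add: indicator_PiE_eq_prod I prod.distrib)
    qed
    also have "\<dots> = (\<Prod>i\<in>I. \<integral>\<^sup>+x. f i x * indicator (A i) x \<partial>N i)"
      by (rule N.product_nn_integral_prod[OF I]) measurable
    also have "\<dots> = (\<Prod>i\<in>I. emeasure (density (N i) (f i)) (A i))"
      by (intro prod.cong refl) (simp add: emeasure_density)
    finally show "emeasure (density (Pi\<^sub>M I N) (\<lambda>y. \<Prod>i\<in>I. f i (y i))) (Pi\<^sub>E I A) =
                  (\<Prod>i\<in>I. emeasure (density (N i) (f i)) (A i))" .
  qed
qed

lemma (in prob_space) nn_integral_indep_normal_shift:
  fixes X :: "nat \<Rightarrow> 'a \<Rightarrow> real"
  assumes k: "k > 0"
    and X_meas: "\<And>i. random_variable borel (X i)"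
    and indep: "indep_vars (\<lambda>_. borel) X {..<k}"
    and normal: "\<And>i. i < k \<Longrightarrow> distributed M lborel (X i) (normal_density 0 (sqrt (\<delta> i)))"
    and \<delta>: "\<And>i. i < k \<Longrightarrow> \<delta> i > 0"
    and Q[measurable]: "Q \<in> borel_measurable (Pi\<^sub>M {..<k} (\<lambda>_. borel))"
  shows "(\<integral>\<^sup>+\<omega>. Q (\<lambda>i\<in>{..<k}. X i \<omega> + c * \<delta> i) \<partial>M) =
         (\<integral>\<^sup>+\<omega>. Q (\<lambda>i\<in>{..<k}. X i \<omega>) * (\<Prod>i<k. ennreal (exp (c * X i \<omega> - c\<^sup>2 * \<delta> i / 2))) \<partial>M)"
proof -
  \<comment> \<open>extended beyond \<open>k\<close> so that every factor \<open>N a i\<close> below is a probability measure\<close>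
  define \<delta>' where "\<delta>' i = (if i < k then \<delta> i else 1)" for i
  have \<delta>'_pos: "\<delta>' i > 0" for i
    using \<delta> by (simp add: \<delta>'_def)
  define N where "N a i = density lborel (normal_density (a * \<delta>' i) (sqrt (\<delta>' i)))" for a i
  define e where "e i x = ennreal (exp (c * x - c\<^sup>2 * \<delta>' i / 2))" for i x
  have sets_N [measurable_cong]: "sets (N a i) = sets borel" for a i
    by (simp add: N_def)
  have sf_N: "sigma_finite_measure (N a i)" for a i
    unfolding N_def using \<delta>'_pos by (intro prob_space_imp_sigma_finite prob_space_normal_density) simp
  have tilt: "density (N 0 i) (e i) = N c i" for i
    unfolding N_def e_def using density_normal_exp_tilt[OF \<delta>'_pos] by simp
  have e_meas[measurable]: "e i \<in> borel_measurable borel" for i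
    unfolding e_def by measurable
  have rv: "random_variable borel (\<lambda>\<omega>. X i \<omega> + a)" for i a
    using X_meas[of i] by simp
  have law: "distr M borel (\<lambda>\<omega>. X i \<omega> + a * \<delta> i) = N a i" if "i < k" for a i
  proof -
    have "distributed M lborel (\<lambda>\<omega>. a * \<delta> i + 1 * X i \<omega>) (normal_density (a * \<delta> i + 1 * 0) (\<bar>1\<bar> * sqrt (\<delta> i)))"
      using normal_density_affine[OF normal[OF that], of 1 "a * \<delta> i"] \<delta>[OF that] by simp
    then show ?thesis
      using that by (simp add: distributed_def N_def \<delta>'_def add.commute cong: distr_cong)
  qed
  have joint_law: "distr M (Pi\<^sub>M {..<k} (\<lambda>_. borel)) (\<lambda>\<omega>. \<lambda>i\<in>{..<k}. X i \<omega> + a * \<delta> i) = Pi\<^sub>M {..<k} (N a)" for a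
  proof -
    have "indep_vars (\<lambda>_. borel) (\<lambda>i \<omega>. X i \<omega> + a * \<delta> i) {..<k}"
      using indep_vars_compose2[OF indep, of "\<lambda>i x. x + a * \<delta> i" "\<lambda>_. borel"] by simp
    then show ?thesis
      using k rv law by (subst indep_vars_iff_distr_eq_PiM[THEN iffD1]) (auto intro!: PiM_cong)
  qed
  have prod_law: "Pi\<^sub>M {..<k} (N c) = density (Pi\<^sub>M {..<k} (N 0)) (\<lambda>y. \<Prod>i<k. e i (y i))"
    using density_PiM_prod[of "{..<k}" "N 0" e] sf_N tilt by simp
  have V_meas: "(\<lambda>\<omega>. \<lambda>i\<in>{..<k}. X i \<omega> + a * \<delta> i) \<in> measurable M (Pi\<^sub>M {..<k} (\<lambda>_. borel))" for a
    using rv by (intro measurable_restrict) auto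
  have transfer: "(\<integral>\<^sup>+y. f y \<partial>Pi\<^sub>M {..<k} (N a)) = (\<integral>\<^sup>+\<omega>. f (\<lambda>i\<in>{..<k}. X i \<omega> + a * \<delta> i) \<partial>M)"
    if "f \<in> borel_measurable (Pi\<^sub>M {..<k} (\<lambda>_. borel))" for f a
    using nn_integral_distr[OF V_meas, of f a] that joint_law[of a] by simp
  have "(\<integral>\<^sup>+\<omega>. Q (\<lambda>i\<in>{..<k}. X i \<omega> + c * \<delta> i) \<partial>M) = (\<integral>\<^sup>+y. Q y \<partial>Pi\<^sub>M {..<k} (N c))"
    by (rule transfer[symmetric]) measurable
  also have "\<dots> = (\<integral>\<^sup>+y. (\<Prod>i<k. e i (y i)) * Q y \<partial>Pi\<^sub>M {..<k} (N 0))"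
    unfolding prod_law by (rule nn_integral_density) measurable
  also have "\<dots> = (\<integral>\<^sup>+\<omega>. (\<Prod>i<k. e i (X i \<omega>)) * Q (\<lambda>i\<in>{..<k}. X i \<omega>) \<partial>M)"
  proof (subst transfer)
    show "(\<lambda>y. (\<Prod>i<k. e i (y i)) * Q y) \<in> borel_measurable (Pi\<^sub>M {..<k} (\<lambda>_. borel))"
      by measurable
  qed (auto intro!: nn_integral_cong prod.cong)
  finally show ?thesis
    using \<delta> by (simp add: e_def \<delta>'_def mult.commute)
qed

lemma finite_partition_of_interval:
  fixes S :: "real set"
  assumes S: "finite S" "S \<subseteq> {a..b}" "a \<in> S" "b \<in> S" and ab: "a < b"
  obtains k and t :: "nat \<Rightarrow> real" where "k > 0" "t 0 = a" "t k = b"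
    "\<And>i j. i < j \<Longrightarrow> j \<le> k \<Longrightarrow> t i < t j" "\<And>i. t i \<in> S" "\<And>x. x \<in> S \<Longrightarrow> \<exists>m\<le>k. t m = x"
proof -
  define L where "L = sorted_list_of_set S"
  define k where "k = length L - 1"
  define t where "t i = L ! min i k" for i
  have "2 \<le> card S"
    using card_mono[of S "{a, b}"] S ab by auto
  then have len: "length L = Suc k" and k: "k > 0"
    by (auto simp: L_def k_def)
  have mono: "t i < t j" if "i < j" "j \<le> k" for i j
    using sorted_wrt_nth_less[OF strict_sorted_list_of_set[of S], of i j] that len
    by (simp add: t_def L_def)
  have set_L: "set L = S"
    using S(1) by (simp add: L_def)
  have range: "t i \<in> S" for i
    using len nth_mem[of "min i k" L] by (simp add: t_def set_L)
  have onto: "\<exists>m\<le>k. t m = x" if x: "x \<in> S" for x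
  proof -
    obtain m where "m < length L" "L ! m = x"
      using x set_L in_set_conv_nth[of x L] by blast
    then show ?thesis
      using len by (intro exI[of _ m]) (auto simp: t_def)
  qed
  have "t 0 = a"
  proof -
    obtain m where m: "m \<le> k" "t m = a"
      using onto S(3) by blast
    have "t 0 \<ge> a"
      using range[of 0] S(2) by auto
    then show ?thesis
      using mono[of 0 m] m by (cases "m = 0") auto
  qed
  moreover have "t k = b"
  proof -
    obtain m where m: "m \<le> k" "t m = b"
      using onto S(4) by blast
    have "t k \<le> b"
      using range[of k] S(2) by auto
    then show ?thesis
      using mono[of m k] m by (cases "m = k") auto
  qed
  ultimately show thesis
    using that k mono range onto by blast
qed

text \<open>Cameron--Martin on finite-dimensional marginals, via the independent Gaussian
  increments along a partition of \<open>[0, T]\<close> through the observation times.\<close>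
lemma std_brownian_motion_drift_change_partition:
  fixes B :: "real \<Rightarrow> 'a \<Rightarrow> real" and G :: "(real \<Rightarrow> real) \<Rightarrow> ennreal"
    and k :: nat and t :: "nat \<Rightarrow> real"
  assumes BM: "std_brownian_motion M B"
    and k: "k > 0" and t0: "t 0 = 0" and tk: "t k = T"
    and mono: "\<And>i j. i < j \<Longrightarrow> j \<le> k \<Longrightarrow> t i < t j" and t_nonneg: "\<And>i. t i \<ge> 0"
    and J: "\<And>j. j \<in> J \<Longrightarrow> \<exists>m\<le>k. t m = j"
    and G[measurable]: "G \<in> borel_measurable (Pi\<^sub>M J (\<lambda>_. borel))"
  shows "(\<integral>\<^sup>+\<omega>. G (\<lambda>j\<in>J. B j \<omega> + c * j) \<partial>M) =
         (\<integral>\<^sup>+\<omega>. G (\<lambda>j\<in>J. B j \<omega>) * ennreal (exp (c * B T \<omega> - c\<^sup>2 * T / 2)) \<partial>M)"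
proof -
  interpret prob_space M
    using BM by (simp add: std_brownian_motion_def)
  have B_meas[measurable]: "\<And>t. t \<ge> 0 \<Longrightarrow> B t \<in> borel_measurable M"
    and B0: "\<And>\<omega>. \<omega> \<in> space M \<Longrightarrow> B 0 \<omega> = 0"
    and incr: "\<And>s t. 0 \<le> s \<Longrightarrow> s < t \<Longrightarrow>
        distributed M lborel (\<lambda>\<omega>. B t \<omega> - B s \<omega>) (normal_density 0 (sqrt (t - s)))"
    and indep: "\<And>(ts::nat \<Rightarrow> real) k. 0 \<le> ts 0 \<Longrightarrow> (\<forall>i<k. ts i < ts (Suc i)) \<Longrightarrow>
        indep_vars (\<lambda>_. borel) (\<lambda>i \<omega>. B (ts (Suc i)) \<omega> - B (ts i) \<omega>) {..<k}"
    using BM unfolding std_brownian_motion_def by auto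
  define idx where "idx j = (SOME m. m \<le> k \<and> t m = j)" for j
  have idx: "idx j \<le> k" "t (idx j) = j" if "j \<in> J" for j
    using someI_ex[OF J[OF that]] by (auto simp: idx_def)
  define X where "X i \<omega> = B (t (Suc i)) \<omega> - B (t i) \<omega>" for i \<omega>
  define \<delta> where "\<delta> i = t (Suc i) - t i" for i
  have X_meas[measurable]: "X i \<in> borel_measurable M" for i
    unfolding X_def using t_nonneg by measurable
  have B_telescope: "B (t m) \<omega> = (\<Sum>i<m. X i \<omega>)" if "\<omega> \<in> space M" for m \<omega>
    using sum_lessThan_telescope[of "\<lambda>i. B (t i) \<omega>" m] B0[OF that] t0 by (simp add: X_def)
  have t_telescope: "t m = (\<Sum>i<m. \<delta> i)" for m
    using sum_lessThan_telescope[of t m] t0 by (simp add: \<delta>_def)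
  define R where "R y = (\<lambda>j\<in>J. \<Sum>i<idx j. y i)" for y :: "nat \<Rightarrow> real"
  have R_meas[measurable]: "R \<in> measurable (Pi\<^sub>M {..<k} (\<lambda>_. borel)) (Pi\<^sub>M J (\<lambda>_. borel))"
  proof -
    have partial_sum: "(\<lambda>y :: nat \<Rightarrow> real. \<Sum>i<m. y i) \<in> borel_measurable (Pi\<^sub>M {..<k} (\<lambda>_. borel))"
      if "m \<le> k" for m
      by measurable (use that in auto)
    then show ?thesis
      unfolding R_def using idx by (intro measurable_restrict partial_sum) auto
  qed
  have path: "(\<lambda>j\<in>J. B j \<omega> + a * j) = R (\<lambda>i\<in>{..<k}. X i \<omega> + a * \<delta> i)" if "\<omega> \<in> space M" for a \<omega>
  proof (rule ext)
    fix j
    show "(\<lambda>j\<in>J. B j \<omega> + a * j) j = R (\<lambda>i\<in>{..<k}. X i \<omega> + a * \<delta> i) j"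
    proof (cases "j \<in> J")
      case True
      have "B j \<omega> + a * j = (\<Sum>i<idx j. X i \<omega>) + a * (\<Sum>i<idx j. \<delta> i)"
        using B_telescope[OF that, of "idx j"] t_telescope[of "idx j"] idx[OF True] by simp
      also have "\<dots> = (\<Sum>i<idx j. X i \<omega> + a * \<delta> i)"
        by (simp add: sum.distrib sum_distrib_left)
      finally show ?thesis
        using True idx[OF True] by (simp add: R_def)
    qed (simp add: R_def)
  qed
  have density: "exp (c * B T \<omega> - c\<^sup>2 * T / 2) = (\<Prod>i<k. exp (c * X i \<omega> - c\<^sup>2 * \<delta> i / 2))"
    if "\<omega> \<in> space M" for \<omega>
    using B_telescope[OF that, of k] t_telescope[of k] tk
    by (simp add: exp_sum[symmetric] sum_subtractf sum_distrib_left sum_divide_distrib)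
  have "(\<integral>\<^sup>+\<omega>. G (\<lambda>j\<in>J. B j \<omega> + c * j) \<partial>M) = (\<integral>\<^sup>+\<omega>. G (R (\<lambda>i\<in>{..<k}. X i \<omega> + c * \<delta> i)) \<partial>M)"
    by (intro nn_integral_cong) (simp add: path)
  also have "\<dots> = (\<integral>\<^sup>+\<omega>. G (R (\<lambda>i\<in>{..<k}. X i \<omega>)) * (\<Prod>i<k. ennreal (exp (c * X i \<omega> - c\<^sup>2 * \<delta> i / 2))) \<partial>M)"
  proof (rule nn_integral_indep_normal_shift[OF k])
    show "indep_vars (\<lambda>_. borel) X {..<k}"
      using indep[of t k] t0 mono unfolding X_def by auto
    show "distributed M lborel (X i) (normal_density 0 (sqrt (\<delta> i)))" "\<delta> i > 0" if "i < k" for i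
      using incr[of "t i" "t (Suc i)"] mono[of i "Suc i"] t_nonneg that
      unfolding X_def \<delta>_def by auto
  qed measurable
  also have "\<dots> = (\<integral>\<^sup>+\<omega>. G (\<lambda>j\<in>J. B j \<omega>) * ennreal (exp (c * B T \<omega> - c\<^sup>2 * T / 2)) \<partial>M)"
    using path[of _ 0] by (intro nn_integral_cong) (simp add: density prod_ennreal)
  finally show ?thesis .
qed

lemma std_brownian_motion_drift_change:
  fixes B :: "real \<Rightarrow> 'a \<Rightarrow> real" and G :: "(real \<Rightarrow> real) \<Rightarrow> ennreal"
  assumes BM: "std_brownian_motion M B"
    and J: "finite J" "J \<subseteq> {0..T}" "T \<in> J"
    and G[measurable]: "G \<in> borel_measurable (Pi\<^sub>M J (\<lambda>_. borel))"
  shows "(\<integral>\<^sup>+\<omega>. G (\<lambda>j\<in>J. B j \<omega> + c * j) \<partial>M) =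
         (\<integral>\<^sup>+\<omega>. G (\<lambda>j\<in>J. B j \<omega>) * ennreal (exp (c * B T \<omega> - c\<^sup>2 * T / 2)) \<partial>M)"
proof (cases "T = 0")
  case True
  then have "J = {0}"
    using J by auto
  moreover have "\<And>\<omega>. \<omega> \<in> space M \<Longrightarrow> B 0 \<omega> = 0"
    using BM by (simp add: std_brownian_motion_def)
  ultimately show ?thesis
    using True by (intro nn_integral_cong) (simp cong: restrict_cong)
next
  case False
  have "finite (insert 0 J)" "insert 0 J \<subseteq> {0..T}" "0 \<in> insert 0 J" "T \<in> insert 0 J" "0 < T"
    using J False by auto
  then obtain k :: nat and t :: "nat \<Rightarrow> real" where k: "k > 0" and t0: "t 0 = 0" and tk: "t k = T"
    and mono: "\<And>i j. i < j \<Longrightarrow> j \<le> k \<Longrightarrow> t i < t j" and range: "\<And>i. t i \<in> insert 0 J"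
    and onto: "\<And>x. x \<in> insert 0 J \<Longrightarrow> \<exists>m\<le>k. t m = x"
    by (rule finite_partition_of_interval) blast
  have "t i \<ge> 0" for i
    using range[of i] J by auto
  then show ?thesis
    using onto by (intro std_brownian_motion_drift_change_partition[OF BM k t0 tk mono _ _ G]) auto
qed

lemma (in prob_space) nn_integral_indicator_mult_indep:
  assumes sub: "subalgebra M N"
    and ind: "indep_set SA (sets N)"
    and C: "C \<in> SA" "C \<in> sets M"
    and g: "g \<in> borel_measurable N"
  shows "(\<integral>\<^sup>+\<omega>. indicator C \<omega> * g \<omega> \<partial>M) = emeasure M C * (\<integral>\<^sup>+\<omega>. g \<omega> \<partial>M)"
  using g
proof (induction rule: borel_measurable_induct)
  case (cong f g)
  have "\<And>x. x \<in> space M \<Longrightarrow> f x = g x" using cong sub by (simp add: subalgebra_def)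
  then have "(\<integral>\<^sup>+\<omega>. indicator C \<omega> * f \<omega> \<partial>M) = (\<integral>\<^sup>+\<omega>. indicator C \<omega> * g \<omega> \<partial>M)"
    and "(\<integral>\<^sup>+\<omega>. f \<omega> \<partial>M) = (\<integral>\<^sup>+\<omega>. g \<omega> \<partial>M)" by (auto intro!: nn_integral_cong)
  then show ?case using cong by simp
next
  case (set A)
  have AM: "A \<in> sets M" using set sub by (auto simp: subalgebra_def)
  have "(\<integral>\<^sup>+\<omega>. indicator C \<omega> * indicator A \<omega> \<partial>M) = emeasure M (C \<inter> A)"
  proof -
    have "(\<integral>\<^sup>+\<omega>. indicator C \<omega> * indicator A \<omega> \<partial>M) = (\<integral>\<^sup>+\<omega>. indicator (C \<inter> A) \<omega> \<partial>M)"
      by (intro nn_integral_cong) (simp add: indicator_def)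
    also have "\<dots> = emeasure M (C \<inter> A)" using AM C by (intro nn_integral_indicator) auto
    finally show ?thesis .
  qed
  also have "\<dots> = emeasure M C * emeasure M A"
    using indep_setD[OF ind C(1) set] AM C
    by (simp add: emeasure_eq_measure sets.Int ennreal_mult)
  finally show ?case using AM by simp
next
  case (mult u c)
  have um: "u \<in> borel_measurable M" using mult measurable_from_subalg[OF sub] by blast
  have "(\<integral>\<^sup>+\<omega>. indicator C \<omega> * (c * u \<omega>) \<partial>M) = c * (\<integral>\<^sup>+\<omega>. indicator C \<omega> * u \<omega> \<partial>M)"
    using um C by (subst nn_integral_cmult[symmetric]) (auto simp: mult_ac)
  then show ?case using mult um by (simp add: nn_integral_cmult mult_ac)
next
  case (add u v)
  have um: "u \<in> borel_measurable M" and vm: "v \<in> borel_measurable M"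
    using add measurable_from_subalg[OF sub] by blast+
  have "(\<integral>\<^sup>+\<omega>. indicator C \<omega> * (v \<omega> + u \<omega>) \<partial>M) = (\<integral>\<^sup>+\<omega>. indicator C \<omega> * v \<omega> \<partial>M) + (\<integral>\<^sup>+\<omega>. indicator C \<omega> * u \<omega> \<partial>M)"
    using um vm C by (simp add: distrib_left nn_integral_add)
  then show ?case using add um vm by (simp add: nn_integral_add distrib_left)
next
  case (seq U)
  have Um: "U i \<in> borel_measurable M" for i using seq measurable_from_subalg[OF sub] by blast
  have "(\<integral>\<^sup>+\<omega>. indicator C \<omega> * (SUP i. U i) \<omega> \<partial>M) = (\<integral>\<^sup>+\<omega>. (SUP i. indicator C \<omega> * U i \<omega>) \<partial>M)"
    by (simp add: SUP_mult_left_ennreal image_comp)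
  also have "\<dots> = (SUP i. (\<integral>\<^sup>+\<omega>. indicator C \<omega> * U i \<omega> \<partial>M))"
  proof (rule nn_integral_monotone_convergence_SUP)
    show "incseq (\<lambda>i \<omega>. indicator C \<omega> * U i \<omega>)"
      unfolding incseq_def le_fun_def
    proof (intro allI impI)
      fix m n :: nat and x assume "m \<le> n"
      then have "U m x \<le> U n x" using \<open>incseq U\<close> by (simp add: incseq_def le_fun_def)
      then show "indicator C x * U m x \<le> indicator C x * U n x" by (rule mult_left_mono) simp
    qed
    show "\<And>i. (\<lambda>\<omega>. indicator C \<omega> * U i \<omega>) \<in> borel_measurable M" using Um C by simp
  qed
  also have "\<dots> = (SUP i. emeasure M C * (\<integral>\<^sup>+\<omega>. U i \<omega> \<partial>M))" using seq by simp
  also have "\<dots> = emeasure M C * (SUP i. (\<integral>\<^sup>+\<omega>. U i \<omega> \<partial>M))"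
    by (simp add: SUP_mult_left_ennreal image_comp)
  also have "(SUP i. (\<integral>\<^sup>+\<omega>. U i \<omega> \<partial>M)) = (\<integral>\<^sup>+\<omega>. (SUP i. U i) \<omega> \<partial>M)"
    unfolding SUP_apply by (rule nn_integral_monotone_convergence_SUP[symmetric]) (use Um \<open>incseq U\<close> in auto)
  finally show ?case .
qed

lemma nn_integral_mult_indicator_eq_on_sigma_sets:
  assumes Gs: "Int_stable G" "G \<subseteq> Pow (space M)" "sigma_sets (space M) G \<subseteq> sets M" "space M \<in> G"
    and f1[measurable]: "f1 \<in> borel_measurable M" and f2[measurable]: "f2 \<in> borel_measurable M"
    and fin1: "(\<integral>\<^sup>+x. f1 x \<partial>M) < \<infinity>"
    and bas: "\<And>A. A \<in> G \<Longrightarrow> (\<integral>\<^sup>+x. f1 x * indicator A x \<partial>M) = (\<integral>\<^sup>+x. f2 x * indicator A x \<partial>M)"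
    and A: "A \<in> sigma_sets (space M) G"
  shows "(\<integral>\<^sup>+x. f1 x * indicator A x \<partial>M) = (\<integral>\<^sup>+x. f2 x * indicator A x \<partial>M)"
  using Gs(1,2) A
proof (induction rule: sigma_sets_induct_disjoint)
  case (basic A) then show ?case by (rule bas)
next
  case empty then show ?case by simp
next
  case (compl A)
  have AM: "A \<in> sets M" using compl Gs by auto
  have split: "(\<integral>\<^sup>+x. f x * indicator (space M) x \<partial>M) = (\<integral>\<^sup>+x. f x * indicator A x \<partial>M) + (\<integral>\<^sup>+x. f x * indicator (space M - A) x \<partial>M)"
    if [measurable]: "f \<in> borel_measurable M" for f
  proof -
    have "(\<integral>\<^sup>+x. f x * indicator (space M) x \<partial>M) = (\<integral>\<^sup>+x. f x * indicator A x + f x * indicator (space M - A) x \<partial>M)"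
      using AM sets.sets_into_space[OF AM] by (intro nn_integral_cong) (auto simp: indicator_def)
    also have "\<dots> = (\<integral>\<^sup>+x. f x * indicator A x \<partial>M) + (\<integral>\<^sup>+x. f x * indicator (space M - A) x \<partial>M)"
      using AM by (intro nn_integral_add) auto
    finally show ?thesis .
  qed
  have le: "(\<integral>\<^sup>+x. f x * indicator A x \<partial>M) < \<infinity>" if "(\<integral>\<^sup>+x. f x \<partial>M) < \<infinity>" for f
    using that by (rule le_less_trans[rotated]) (intro nn_integral_mono, simp add: indicator_def)
  have S: "(\<integral>\<^sup>+x. f1 x * indicator (space M) x \<partial>M) = (\<integral>\<^sup>+x. f2 x * indicator (space M) x \<partial>M)"
    using bas Gs(4) by blast
  have "(\<integral>\<^sup>+x. f1 x * indicator A x \<partial>M) + (\<integral>\<^sup>+x. f1 x * indicator (space M - A) x \<partial>M)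
      = (\<integral>\<^sup>+x. f1 x * indicator A x \<partial>M) + (\<integral>\<^sup>+x. f2 x * indicator (space M - A) x \<partial>M)"
    using S split[OF f1] split[OF f2] compl.IH by simp
  then show ?case using le[OF fin1] by (auto simp: ennreal_add_left_cancel top_unique)
next
  case (union A)
  have AM: "A i \<in> sets M" for i using union(2) Gs(3) by auto
  have eq: "(\<integral>\<^sup>+x. f x * indicator (\<Union>i. A i) x \<partial>M) = (\<Sum>i. \<integral>\<^sup>+x. f x * indicator (A i) x \<partial>M)"
    if [measurable]: "f \<in> borel_measurable M" for f
  proof -
    have "(\<integral>\<^sup>+x. f x * indicator (\<Union>i. A i) x \<partial>M) = (\<integral>\<^sup>+x. (\<Sum>i. f x * indicator (A i) x) \<partial>M)"
      using suminf_indicator[OF union.hyps(1)] by (simp add: ennreal_suminf_cmult)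
    also have "\<dots> = (\<Sum>i. \<integral>\<^sup>+x. f x * indicator (A i) x \<partial>M)"
      using AM by (intro nn_integral_suminf) auto
    finally show ?thesis .
  qed
  show ?case unfolding eq[OF f1] eq[OF f2] using union.IH by simp
qed

lemma set_integral_nonneg_eq_nn_integral:
  assumes [measurable]: "g \<in> borel_measurable M" and nn: "\<And>x. 0 \<le> g x" and [measurable]: "A \<in> sets M"
  shows "(\<integral>x\<in>A. g x \<partial>M) = enn2real (\<integral>\<^sup>+x. ennreal (g x) * indicator A x \<partial>M)"
proof -
  have "(\<integral>x\<in>A. g x \<partial>M) = enn2real (\<integral>\<^sup>+x. ennreal (indicator A x *\<^sub>R g x) \<partial>M)"
    unfolding set_lebesgue_integral_def using nn by (intro integral_eq_nn_integral) auto
  also have "(\<integral>\<^sup>+x. ennreal (indicator A x *\<^sub>R g x) \<partial>M) = (\<integral>\<^sup>+x. ennreal (g x) * indicator A x \<partial>M)"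
    by (intro nn_integral_cong) (simp add: indicator_def)
  finally show ?thesis .
qed

section \<open>The posterior of the energy given the observation\<close>

locale energy_observation =
  fixes D :: nat and E :: "nat \<Rightarrow> real" and p :: "nat \<Rightarrow> real" and \<sigma> :: real
    and M :: "'a measure" and B :: "real \<Rightarrow> 'a \<Rightarrow> real" and H :: "'a \<Rightarrow> real"
    and \<xi> :: "real \<Rightarrow> 'a \<Rightarrow> real" and t :: real
  assumes distinct: "inj_on E {1..D}"
    and p_sum: "(\<Sum>r=1..D. p r) = 1"
    and BM: "std_brownian_motion M B"
    and H_meas: "H \<in> borel_measurable M"
    and indep: "prob_space.indep_set M {H -` A \<inter> space M | A. A \<in> sets borel}
                  (sets (sigma (space M) {B s -` A \<inter> space M | s A. s \<ge> 0 \<and> A \<in> sets borel}))"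
    and H_dist: "\<And>r. r \<in> {1..D} \<Longrightarrow> measure M {\<omega> \<in> space M. H \<omega> = E r} = p r"
    and xi_def: "\<And>s \<omega>. \<xi> s \<omega> = \<sigma> * s * H \<omega> + B s \<omega>"
    and t: "t \<ge> 0"
begin

sublocale prob_space M
  using BM by (simp add: std_brownian_motion_def)

lemma B_measurable[measurable]: "s \<ge> 0 \<Longrightarrow> B s \<in> borel_measurable M"
  using BM by (simp add: std_brownian_motion_def)

lemma xi_measurable[measurable]: "s \<ge> 0 \<Longrightarrow> \<xi> s \<in> borel_measurable M"
proof -
  have "\<xi> s = (\<lambda>\<omega>. \<sigma> * s * H \<omega> + B s \<omega>)"
    by (simp add: xi_def fun_eq_iff)
  then show "s \<ge> 0 \<Longrightarrow> \<xi> s \<in> borel_measurable M"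
    using H_meas by simp
qed

abbreviation eigen_event :: "nat \<Rightarrow> 'a set" where
  "eigen_event r \<equiv> {\<omega> \<in> space M. H \<omega> = E r}"

lemma eigen_event_sets[measurable]: "eigen_event r \<in> sets M"
  using measurable_sets[OF H_meas, of "{E r}"] by (simp add: vimage_def Int_def conj_commute)

lemma p_nonneg: "r \<in> {1..D} \<Longrightarrow> p r \<ge> 0"
  using H_dist[of r] by (metis measure_nonneg)

lemma AE_eigenvalue: "AE \<omega> in M. \<exists>r\<in>{1..D}. H \<omega> = E r"
proof -
  have "disjoint_family_on eigen_event {1..D}"
    using inj_onD[OF distinct] by (auto simp: disjoint_family_on_def)
  then have "measure M (\<Union>r\<in>{1..D}. eigen_event r) = (\<Sum>r=1..D. measure M (eigen_event r))"
    by (intro finite_measure_finite_Union) auto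
  also have "\<dots> = 1"
    using H_dist p_sum by simp
  finally have "AE \<omega> in M. \<omega> \<in> (\<Union>r\<in>{1..D}. eigen_event r)"
    by (intro AE_prob_1)
  then show ?thesis
    by auto
qed

lemma nn_integral_sum_eigen_events:
  assumes [measurable]: "f \<in> borel_measurable M"
  shows "(\<integral>\<^sup>+\<omega>. f \<omega> \<partial>M) = (\<Sum>r=1..D. \<integral>\<^sup>+\<omega>. indicator (eigen_event r) \<omega> * f \<omega> \<partial>M)"
proof -
  have "AE \<omega> in M. (\<Sum>r=1..D. indicator (eigen_event r) \<omega>) = (1 :: ennreal)"
    using AE_eigenvalue AE_space
  proof eventually_elim
    case (elim \<omega>)
    then obtain r0 where r0: "r0 \<in> {1..D}" "H \<omega> = E r0"
      by blast
    have "indicator (eigen_event r) \<omega> = (if r = r0 then 1 else 0 :: ennreal)" if "r \<in> {1..D}" for r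
      using r0 elim inj_onD[OF distinct _ that r0(1)] by (auto simp: indicator_def)
    then have "(\<Sum>r=1..D. indicator (eigen_event r) \<omega>) = (\<Sum>r=1..D. if r = r0 then 1 else 0 :: ennreal)"
      by (intro sum.cong) auto
    then show ?case
      using r0(1) by simp
  qed
  then have "(\<integral>\<^sup>+\<omega>. f \<omega> \<partial>M) = (\<integral>\<^sup>+\<omega>. (\<Sum>r=1..D. indicator (eigen_event r) \<omega>) * f \<omega> \<partial>M)"
    by (intro nn_integral_cong_AE) auto
  also have "\<dots> = (\<Sum>r=1..D. \<integral>\<^sup>+\<omega>. indicator (eigen_event r) \<omega> * f \<omega> \<partial>M)"
    unfolding sum_distrib_right by (rule nn_integral_sum) measurable
  finally show ?thesis .
qed

text \<open>The likelihood of the path up to time \<open>t\<close> under \<open>H = E r\<close>, relative to the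
  driftless path; it depends on the path only through its endpoint.\<close>
definition weight :: "nat \<Rightarrow> real \<Rightarrow> real" where
  "weight r x = exp (\<sigma> * E r * x - \<sigma>\<^sup>2 * (E r)\<^sup>2 * t / 2)"

definition normalizer :: "real \<Rightarrow> real" where
  "normalizer x = (\<Sum>r=1..D. p r * weight r x)"

definition posterior :: "nat \<Rightarrow> real \<Rightarrow> real" where
  "posterior n x = p n * weight n x / normalizer x"

lemma normalizer_pos: "normalizer x > 0"
proof -
  obtain r where "r \<in> {1..D}" "p r > 0"
    using p_sum p_nonneg sum_nonpos[of "{1..D}" p] by force
  then show ?thesis
    unfolding normalizer_def using p_nonneg
    by (intro sum_pos2[of _ r]) (auto simp: weight_def)
qed

lemma posterior_nonneg: "n \<in> {1..D} \<Longrightarrow> posterior n x \<ge> 0"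
  using normalizer_pos[of x] p_nonneg[of n] by (simp add: posterior_def weight_def)

lemma posterior_le_1: "n \<in> {1..D} \<Longrightarrow> posterior n x \<le> 1"
  using normalizer_pos[of x] p_nonneg
    member_le_sum[of n "{1..D}" "\<lambda>r. p r * weight r x"]
  by (simp add: posterior_def normalizer_def weight_def)

lemma posterior_mult_normalizer: "posterior n x * normalizer x = p n * weight n x"
  using normalizer_pos[of x] by (simp add: posterior_def)

lemma posterior_measurable[measurable]: "posterior n \<in> borel_measurable borel"
  unfolding posterior_def normalizer_def weight_def by measurable

definition Bsigma :: "'a measure" where
  "Bsigma = sigma (space M) {B s -` A \<inter> space M | s A. s \<ge> 0 \<and> A \<in> sets borel}"

lemma subalgebra_Bsigma: "subalgebra M Bsigma"
proof -
  have "{B s -` A \<inter> space M | s A. s \<ge> 0 \<and> A \<in> sets borel} \<subseteq> sets M"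
    "{B s -` A \<inter> space M | s A. s \<ge> 0 \<and> A \<in> sets borel} \<subseteq> Pow (space M)"
    by auto
  then show ?thesis
    unfolding subalgebra_def Bsigma_def by (simp add: sets_measure_of sets.sigma_sets_subset)
qed

lemma B_measurable_Bsigma[measurable]: "s \<ge> 0 \<Longrightarrow> B s \<in> borel_measurable Bsigma"
proof (rule measurableI)
  fix A :: "real set" assume "A \<in> sets borel" "s \<ge> 0"
  moreover have "{B s -` A \<inter> space M | s A. s \<ge> 0 \<and> A \<in> sets borel} \<subseteq> Pow (space M)"
    by auto
  ultimately show "B s -` A \<inter> space Bsigma \<in> sets Bsigma"
    unfolding Bsigma_def by (auto simp: sets_measure_of intro!: sigma_sets.Basic)
qed simp

lemma nn_integral_eigen_event_path:
  assumes J: "finite J" "J \<subseteq> {0..t}" "t \<in> J" and r: "r \<in> {1..D}"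
    and \<Psi>[measurable]: "\<Psi> \<in> borel_measurable (Pi\<^sub>M J (\<lambda>_. borel))"
  shows "(\<integral>\<^sup>+\<omega>. indicator (eigen_event r) \<omega> * \<Psi> (\<lambda>j\<in>J. \<xi> j \<omega>) \<partial>M) =
         ennreal (p r) * (\<integral>\<^sup>+\<omega>. \<Psi> (\<lambda>j\<in>J. B j \<omega>) * ennreal (weight r (B t \<omega>)) \<partial>M)"
proof -
  have drift: "(\<lambda>j\<in>J. \<xi> j \<omega>) = (\<lambda>j\<in>J. B j \<omega> + \<sigma> * E r * j)" if "H \<omega> = E r" for \<omega>
    using that by (simp add: xi_def algebra_simps)
  have shifted_meas: "(\<lambda>\<omega>. \<Psi> (\<lambda>j\<in>J. B j \<omega> + \<sigma> * E r * j)) \<in> borel_measurable Bsigma"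
    using J by (intro measurable_compose[OF measurable_restrict \<Psi>]) auto
  have "(\<integral>\<^sup>+\<omega>. indicator (eigen_event r) \<omega> * \<Psi> (\<lambda>j\<in>J. \<xi> j \<omega>) \<partial>M) =
        (\<integral>\<^sup>+\<omega>. indicator (eigen_event r) \<omega> * \<Psi> (\<lambda>j\<in>J. B j \<omega> + \<sigma> * E r * j) \<partial>M)"
    by (intro nn_integral_cong) (simp add: indicator_def drift)
  also have "\<dots> = emeasure M (eigen_event r) * (\<integral>\<^sup>+\<omega>. \<Psi> (\<lambda>j\<in>J. B j \<omega> + \<sigma> * E r * j) \<partial>M)"
    using indep unfolding Bsigma_def[symmetric]
    by (intro nn_integral_indicator_mult_indep[OF subalgebra_Bsigma _ _ _ shifted_meas])
       (auto intro: exI[of _ "{E r}"])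
  also have "\<dots> = ennreal (p r) * (\<integral>\<^sup>+\<omega>. \<Psi> (\<lambda>j\<in>J. B j \<omega>) * ennreal (weight r (B t \<omega>)) \<partial>M)"
    using H_dist[OF r] std_brownian_motion_drift_change[OF BM J \<Psi>, of "\<sigma> * E r"]
    by (simp add: emeasure_eq_measure weight_def power_mult_distrib)
  finally show ?thesis .
qed

text \<open>Bayes' formula, tested against functionals of the observed path.\<close>
lemma nn_integral_eigen_event_eq_posterior:
  assumes J: "finite J" "J \<subseteq> {0..t}" "t \<in> J" and n: "n \<in> {1..D}"
    and \<Psi>[measurable]: "\<Psi> \<in> borel_measurable (Pi\<^sub>M J (\<lambda>_. borel))"
  shows "(\<integral>\<^sup>+\<omega>. indicator (eigen_event n) \<omega> * \<Psi> (\<lambda>j\<in>J. \<xi> j \<omega>) \<partial>M) =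
         (\<integral>\<^sup>+\<omega>. ennreal (posterior n (\<xi> t \<omega>)) * \<Psi> (\<lambda>j\<in>J. \<xi> j \<omega>) \<partial>M)"
proof -
  define \<Psi>' where "\<Psi>' y = ennreal (posterior n (y t)) * \<Psi> y" for y
  have \<Psi>'_meas[measurable]: "\<Psi>' \<in> borel_measurable (Pi\<^sub>M J (\<lambda>_. borel))"
    unfolding \<Psi>'_def using J by measurable
  have B_path_meas[measurable]: "(\<lambda>\<omega>. \<lambda>j\<in>J. B j \<omega>) \<in> measurable M (Pi\<^sub>M J (\<lambda>_. borel))"
    using J by (intro measurable_restrict) auto
  have xi_path_meas[measurable]: "(\<lambda>\<omega>. \<lambda>j\<in>J. \<xi> j \<omega>) \<in> measurable M (Pi\<^sub>M J (\<lambda>_. borel))"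
    using J by (intro measurable_restrict) auto
  have "(\<integral>\<^sup>+\<omega>. ennreal (posterior n (\<xi> t \<omega>)) * \<Psi> (\<lambda>j\<in>J. \<xi> j \<omega>) \<partial>M) =
        (\<integral>\<^sup>+\<omega>. \<Psi>' (\<lambda>j\<in>J. \<xi> j \<omega>) \<partial>M)"
    using J by (simp add: \<Psi>'_def)
  also have "\<dots> = (\<Sum>r=1..D. \<integral>\<^sup>+\<omega>. indicator (eigen_event r) \<omega> * \<Psi>' (\<lambda>j\<in>J. \<xi> j \<omega>) \<partial>M)"
    by (rule nn_integral_sum_eigen_events) measurable
  also have "\<dots> = (\<Sum>r=1..D. ennreal (p r) * (\<integral>\<^sup>+\<omega>. \<Psi>' (\<lambda>j\<in>J. B j \<omega>) * ennreal (weight r (B t \<omega>)) \<partial>M))"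
    by (intro sum.cong refl nn_integral_eigen_event_path[OF J]) auto
  also have "\<dots> = (\<integral>\<^sup>+\<omega>. \<Psi>' (\<lambda>j\<in>J. B j \<omega>) * ennreal (normalizer (B t \<omega>)) \<partial>M)"
  proof -
    have "ennreal (normalizer x) = (\<Sum>r=1..D. ennreal (p r) * ennreal (weight r x))" for x
      unfolding normalizer_def using p_nonneg
      by (subst sum_ennreal[symmetric]) (auto simp: ennreal_mult weight_def)
    then show ?thesis
      using t by (simp add: nn_integral_sum nn_integral_cmult sum_distrib_left mult_ac weight_def)
  qed
  also have "\<dots> = (\<integral>\<^sup>+\<omega>. ennreal (p n) * (\<Psi> (\<lambda>j\<in>J. B j \<omega>) * ennreal (weight n (B t \<omega>))) \<partial>M)"
  proof (intro nn_integral_cong)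
    fix \<omega>
    have "ennreal (posterior n (B t \<omega>)) * ennreal (normalizer (B t \<omega>)) =
          ennreal (posterior n (B t \<omega>) * normalizer (B t \<omega>))"
      using posterior_nonneg[OF n] normalizer_pos[of "B t \<omega>"] by (simp add: ennreal_mult)
    also have "\<dots> = ennreal (p n) * ennreal (weight n (B t \<omega>))"
      using p_nonneg[OF n] by (simp add: posterior_mult_normalizer ennreal_mult weight_def)
    finally show "\<Psi>' (\<lambda>j\<in>J. B j \<omega>) * ennreal (normalizer (B t \<omega>)) =
               ennreal (p n) * (\<Psi> (\<lambda>j\<in>J. B j \<omega>) * ennreal (weight n (B t \<omega>)))"
      using J by (simp add: \<Psi>'_def mult_ac)
  qed
  also have "\<dots> = (\<integral>\<^sup>+\<omega>. indicator (eigen_event n) \<omega> * \<Psi> (\<lambda>j\<in>J. \<xi> j \<omega>) \<partial>M)"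
    using t by (simp add: nn_integral_cmult nn_integral_eigen_event_path[OF J n] weight_def)
  finally show ?thesis ..
qed

lemma sets_gen_filtration:
  "sets (gen_filtration M \<xi> t) = sigma_sets (space M) {\<xi> s -` A \<inter> space M | s A. s \<in> {0..t} \<and> A \<in> sets borel}"
  unfolding gen_filtration_def by (rule sets_measure_of) auto

lemma subalgebra_gen_filtration: "subalgebra M (gen_filtration M \<xi> t)"
  unfolding subalgebra_def sets_gen_filtration
  by (auto simp: gen_filtration_def space_measure_of_conv intro!: sets.sigma_sets_subset)

lemma xi_measurable_gen_filtration[measurable]: "\<xi> t \<in> borel_measurable (gen_filtration M \<xi> t)"
proof (rule measurableI)
  fix A :: "real set" assume "A \<in> sets borel"
  then show "\<xi> t -` A \<inter> space (gen_filtration M \<xi> t) \<in> sets (gen_filtration M \<xi> t)"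
    unfolding sets_gen_filtration using t
    by (intro sigma_sets.Basic) (auto simp: gen_filtration_def space_measure_of_conv)
qed simp

text \<open>Cylinder events of the observed path always including the endpoint \<open>t\<close>: an
  \<open>\<inter>\<close>-stable generator of the observation \<open>\<sigma>\<close>-algebra on which \<open>\<xi> t\<close> is visible.\<close>
definition cylinders :: "'a set set" where
  "cylinders = {{\<omega> \<in> space M. \<forall>j\<in>J. \<xi> j \<omega> \<in> C j} | J C.
      finite J \<and> J \<subseteq> {0..t} \<and> t \<in> J \<and> (\<forall>j\<in>J. C j \<in> sets borel)}"

lemma Int_stable_cylinders: "Int_stable cylinders"
proof (rule Int_stableI)
  fix a b assume "a \<in> cylinders" "b \<in> cylinders"
  then obtain J1 C1 J2 C2
    where a: "a = {\<omega>\<in>space M. \<forall>j\<in>J1. \<xi> j \<omega> \<in> C1 j}" "finite J1" "J1 \<subseteq> {0..t}" "t \<in> J1" "\<forall>j\<in>J1. C1 j \<in> sets borel"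
      and b: "b = {\<omega>\<in>space M. \<forall>j\<in>J2. \<xi> j \<omega> \<in> C2 j}" "finite J2" "J2 \<subseteq> {0..t}" "t \<in> J2" "\<forall>j\<in>J2. C2 j \<in> sets borel"
    unfolding cylinders_def by blast
  define C where "C j = (if j \<in> J1 then C1 j else UNIV) \<inter> (if j \<in> J2 then C2 j else UNIV)" for j
  have "a \<inter> b = {\<omega>\<in>space M. \<forall>j\<in>J1 \<union> J2. \<xi> j \<omega> \<in> C j}"
    unfolding a b C_def by auto
  moreover have "\<forall>j\<in>J1 \<union> J2. C j \<in> sets borel"
    using a b by (auto simp: C_def)
  ultimately show "a \<inter> b \<in> cylinders"
    unfolding cylinders_def using a b
    by (intro CollectI exI[of _ "J1 \<union> J2"] exI[of _ C]) auto
qed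

lemma cylinders_sets: "cylinders \<subseteq> sets M"
proof
  fix a assume "a \<in> cylinders"
  then obtain J C where a: "a = {\<omega>\<in>space M. \<forall>j\<in>J. \<xi> j \<omega> \<in> C j}" "finite J" "J \<subseteq> {0..t}"
      "\<forall>j\<in>J. C j \<in> sets borel"
    unfolding cylinders_def by blast
  have "Measurable.pred M (\<lambda>\<omega>. \<forall>j\<in>J. \<xi> j \<omega> \<in> C j)"
  proof (rule pred_intros_finite(3)[OF a(2)])
    fix j assume "j \<in> J"
    then have [measurable]: "C j \<in> sets borel" and "j \<ge> 0"
      using a by auto
    then show "Measurable.pred M (\<lambda>\<omega>. \<xi> j \<omega> \<in> C j)"
      by measurable
  qed
  then show "a \<in> sets M"
    unfolding a(1) pred_def .
qed

lemma space_in_cylinders: "space M \<in> cylinders"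
proof -
  have "space M = {\<omega>\<in>space M. \<forall>j\<in>{t}. \<xi> j \<omega> \<in> UNIV}"
    by auto
  then show ?thesis
    unfolding cylinders_def using t
    by (intro CollectI exI[of _ "{t}"] exI[of _ "\<lambda>_. UNIV"] conjI) auto
qed

lemma sets_gen_filtration_subset_cylinders:
  "sets (gen_filtration M \<xi> t) \<subseteq> sigma_sets (space M) cylinders"
  unfolding sets_gen_filtration
proof (rule sigma_sets_mono', safe)
  fix s A assume s: "s \<in> {0..t}" and A: "A \<in> sets (borel :: real measure)"
  define C where "C j = (if j = s then A else UNIV)" for j
  have "\<xi> s -` A \<inter> space M = {\<omega>\<in>space M. \<forall>j\<in>{s, t}. \<xi> j \<omega> \<in> C j}"
    by (auto simp: C_def)
  moreover have "\<forall>j\<in>{s, t}. C j \<in> sets borel"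
    using A by (auto simp: C_def)
  ultimately show "\<xi> s -` A \<inter> space M \<in> cylinders"
    unfolding cylinders_def using s t
    by (intro CollectI exI[of _ "{s, t}"] exI[of _ C] conjI) auto
qed

lemma nn_integral_eigen_event_eq_posterior_on_cylinder:
  assumes n: "n \<in> {1..D}" and A: "A \<in> cylinders"
  shows "(\<integral>\<^sup>+\<omega>. indicator (eigen_event n) \<omega> * indicator A \<omega> \<partial>M) =
         (\<integral>\<^sup>+\<omega>. ennreal (posterior n (\<xi> t \<omega>)) * indicator A \<omega> \<partial>M)"
proof -
  obtain J C where A_eq: "A = {\<omega>\<in>space M. \<forall>j\<in>J. \<xi> j \<omega> \<in> C j}" and J: "finite J" "J \<subseteq> {0..t}" "t \<in> J"
    and C: "\<forall>j\<in>J. C j \<in> sets borel"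
    using A unfolding cylinders_def by blast
  have PiE_meas: "Pi\<^sub>E J C \<in> sets (Pi\<^sub>M J (\<lambda>_. borel))"
    using J C by (intro sets_PiM_I_finite) auto
  have A_path: "indicator A \<omega> = indicator (Pi\<^sub>E J C) (\<lambda>j\<in>J. \<xi> j \<omega>)" if "\<omega> \<in> space M" for \<omega> :: 'a
    using that by (simp add: A_eq indicator_def restrict_PiE_iff Pi_iff)
  show ?thesis
    using nn_integral_eigen_event_eq_posterior[OF J n borel_measurable_indicator[OF PiE_meas]]
    by (simp add: A_path cong: nn_integral_cong)
qed

lemma nn_integral_eigen_event_eq_posterior_on_gen_filtration:
  assumes n: "n \<in> {1..D}" and A: "A \<in> sets (gen_filtration M \<xi> t)"
  shows "(\<integral>\<^sup>+\<omega>. indicator (eigen_event n) \<omega> * indicator A \<omega> \<partial>M) =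
         (\<integral>\<^sup>+\<omega>. ennreal (posterior n (\<xi> t \<omega>)) * indicator A \<omega> \<partial>M)"
proof (rule nn_integral_mult_indicator_eq_on_sigma_sets)
  show "Int_stable cylinders" "cylinders \<subseteq> Pow (space M)" "space M \<in> cylinders"
    using Int_stable_cylinders cylinders_sets sets.sets_into_space space_in_cylinders by auto
  show "sigma_sets (space M) cylinders \<subseteq> sets M"
    by (rule sets.sigma_sets_subset[OF cylinders_sets])
  show "A \<in> sigma_sets (space M) cylinders"
    using A sets_gen_filtration_subset_cylinders by blast
  have "(\<integral>\<^sup>+\<omega>. indicator (eigen_event n) \<omega> \<partial>M) \<le> (\<integral>\<^sup>+\<omega>. 1 \<partial>M)"
    by (intro nn_integral_mono) (simp add: indicator_def)
  then show "(\<integral>\<^sup>+\<omega>. indicator (eigen_event n) \<omega> \<partial>M) < \<infinity>"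
    by (simp add: emeasure_space_1 le_less_trans)
qed (use nn_integral_eigen_event_eq_posterior_on_cylinder[OF n] t in auto)

lemma real_cond_exp_eigen_event:
  assumes n: "n \<in> {1..D}"
  shows "AE \<omega> in M. real_cond_exp M (gen_filtration M \<xi> t) (indicator (eigen_event n)) \<omega> = posterior n (\<xi> t \<omega>)"
proof -
  interpret sigma_finite_subalgebra M "gen_filtration M \<xi> t"
    using subalgebra_gen_filtration
    by (intro finite_measure_subalgebra_is_sigma_finite)
       (simp add: finite_measure_subalgebra_def finite_measure_subalgebra_axioms_def finite_measure_axioms)
  have post_F: "(\<lambda>\<omega>. posterior n (\<xi> t \<omega>)) \<in> borel_measurable (gen_filtration M \<xi> t)"
    by measurable
  have [measurable]: "(\<lambda>\<omega>. posterior n (\<xi> t \<omega>)) \<in> borel_measurable M"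
    using measurable_from_subalg[OF subalgebra_gen_filtration post_F] .
  have int_indicator: "integrable M (indicator (eigen_event n) :: 'a \<Rightarrow> real)"
    by (rule integrable_const_bound[where B=1]) (auto simp: indicator_def)
  have int_posterior: "integrable M (\<lambda>\<omega>. posterior n (\<xi> t \<omega>))"
    using posterior_nonneg[OF n] posterior_le_1[OF n]
    by (intro integrable_const_bound[where B=1]) auto
  show ?thesis
  proof (rule real_cond_exp_charact[OF _ int_indicator int_posterior post_F])
    fix A assume A: "A \<in> sets (gen_filtration M \<xi> t)"
    then have [measurable]: "A \<in> sets M"
      using subalgebra_gen_filtration by (auto simp: subalgebra_def)
    show "(\<integral>x\<in>A. indicator (eigen_event n) x \<partial>M) = (\<integral>x\<in>A. posterior n (\<xi> t x) \<partial>M)"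
      using nn_integral_eigen_event_eq_posterior_on_gen_filtration[OF n A] posterior_nonneg[OF n]
      by (simp add: set_integral_nonneg_eq_nn_integral ennreal_indicator)
  qed
qed

end

section \<open>The conditional state\<close>

lemma exp_quadratic_mult_cnj:
  fixes s hbar \<sigma> x e f :: real
  shows "exp (- \<i> * complex_of_real (s / hbar) * e + complex_of_real (\<sigma> * x / 2) * e
              - complex_of_real (\<sigma>\<^sup>2 * s / 4) * e ^ 2) *
         cnj (exp (- \<i> * complex_of_real (s / hbar) * f + complex_of_real (\<sigma> * x / 2) * f
              - complex_of_real (\<sigma>\<^sup>2 * s / 4) * f ^ 2)) =
         exp (- \<i> * complex_of_real ((e - f) * s / hbar)) *
         complex_of_real (exp (\<sigma> * (e + f) * x / 2 - \<sigma>\<^sup>2 * (e\<^sup>2 + f\<^sup>2) * s / 4))"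
proof -
  define g where "g y = - \<i> * complex_of_real (s / hbar) * y + complex_of_real (\<sigma> * x / 2) * y
                       - complex_of_real (\<sigma>\<^sup>2 * s / 4) * y ^ 2" for y :: real
  have "g e + cnj (g f) = - \<i> * complex_of_real ((e - f) * s / hbar) +
          complex_of_real (\<sigma> * (e + f) * x / 2 - \<sigma>\<^sup>2 * (e\<^sup>2 + f\<^sup>2) * s / 4)"
    by (cases "hbar = 0") (simp_all add: g_def complex_eq_iff power2_eq_square field_simps)
  moreover have "exp (g e) * cnj (exp (g f)) = exp (g e + cnj (g f))"
    by (simp add: exp_add exp_cnj)
  ultimately have "exp (g e) * cnj (exp (g f)) = exp (- \<i> * complex_of_real ((e - f) * s / hbar)) *
         complex_of_real (exp (\<sigma> * (e + f) * x / 2 - \<sigma>\<^sup>2 * (e\<^sup>2 + f\<^sup>2) * s / 4))"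
    by (simp only: exp_add exp_of_real)
  then show ?thesis
    by (simp only: g_def)
qed

lemma (in energy_observation) normalized_evolution_expansion:
  assumes sf: "spectral_family D P"
    and spectral: "Hop = (\<Sum>r=1..D. cscale (complex_of_real (E r)) (P r))"
    and dens: "density_matrix \<rho>0"
    and p_def: "\<And>r. p r = Re (trace (\<rho>0 ** P r))"
    and K_def: "K = mexp (cscale (- \<i> * complex_of_real (t / hbar)) Hop
                     + cscale (complex_of_real (\<sigma> * \<xi> t \<omega> / 2)) Hop
                     - cscale (complex_of_real (\<sigma>\<^sup>2 * t / 4)) (Hop ** Hop))"
    and Phi_def: "\<And>n m. \<Phi> n m =
        exp (\<sigma> * (E n + E m) * \<xi> t \<omega> / 2 - \<sigma>\<^sup>2 * (E n + E m)\<^sup>2 * t / 8)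
        / (\<Sum>r=1..D. p r * exp (\<sigma> * E r * \<xi> t \<omega> - \<sigma>\<^sup>2 * (E r)\<^sup>2 * t / 2))
        * exp (- \<sigma>\<^sup>2 * (E n - E m)\<^sup>2 * t / 8)"
  shows "cscale (1 / trace (K ** \<rho>0 ** adjoint_mat K)) (K ** \<rho>0 ** adjoint_mat K) =
     (\<Sum>n\<in>{n\<in>{1..D}. p n > 0}.
        cscale (complex_of_real (posterior n (\<xi> t \<omega>)) / trace (\<rho>0 ** P n)) (P n ** \<rho>0 ** P n))
   + (\<Sum>n=1..D. \<Sum>m\<in>{1..D} - {n}.
        cscale (exp (- \<i> * complex_of_real ((E n - E m) * t / hbar)) * complex_of_real (\<Phi> n m))
          (P n ** \<rho>0 ** P m))"
proof -
  interpret spectral_family D P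
    by (rule sf)
  define x where "x = \<xi> t \<omega>"
  define k where "k r = exp (- \<i> * complex_of_real (t / hbar) * E r + complex_of_real (\<sigma> * x / 2) * E r
                       - complex_of_real (\<sigma>\<^sup>2 * t / 4) * E r ^ 2)" for r
  have k_mult_cnj: "k n * cnj (k m) = exp (- \<i> * complex_of_real ((E n - E m) * t / hbar)) *
      complex_of_real (exp (\<sigma> * (E n + E m) * x / 2 - \<sigma>\<^sup>2 * ((E n)\<^sup>2 + (E m)\<^sup>2) * t / 4))" for n m
    unfolding k_def by (rule exp_quadratic_mult_cnj)
  have norm_k: "(cmod (k r))\<^sup>2 = weight r x" for r
  proof -
    have "complex_of_real ((cmod (k r))\<^sup>2) = complex_of_real (weight r x)"
      unfolding complex_norm_square k_mult_cnj by (simp add: weight_def power2_eq_square field_simps)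
    then show ?thesis
      by (simp only: of_real_eq_iff)
  qed
  have Z: "(\<Sum>r=1..D. p r * (cmod (k r))\<^sup>2) = normalizer x"
    by (simp add: norm_k normalizer_def)
  have K: "K = (\<Sum>r=1..D. cscale (k r) (P r))"
    unfolding K_def k_def x_def by (rule mexp_quadratic_spectral[OF spectral])
  have Phi: "\<Phi> n m = exp (\<sigma> * (E n + E m) * x / 2 - \<sigma>\<^sup>2 * ((E n)\<^sup>2 + (E m)\<^sup>2) * t / 4) / normalizer x"
    for n m
    by (simp add: Phi_def x_def normalizer_def weight_def exp_add[symmetric] power2_eq_square field_simps)
  have "cscale (1 / trace (K ** \<rho>0 ** adjoint_mat K)) (K ** \<rho>0 ** adjoint_mat K) =
     (\<Sum>n\<in>{n\<in>{1..D}. p n > 0}.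
        cscale (complex_of_real (p n * (cmod (k n))\<^sup>2 / normalizer x) / trace (\<rho>0 ** P n)) (P n ** \<rho>0 ** P n))
   + (\<Sum>n=1..D. \<Sum>m\<in>{1..D} - {n}. cscale (k n * cnj (k m) / complex_of_real (normalizer x)) (P n ** \<rho>0 ** P m))"
    using normalized_spectral_sandwich[OF dens p_def p_nonneg K] unfolding Z .
  then show ?thesis
    by (simp add: posterior_def norm_k k_mult_cnj Phi x_def)
qed

theorem proposition8:
  fixes Hop :: "complex^'n^'n"   \<comment> \<open>Hamiltonian operator on the finite-dim Hilbert space complex^'n\<close>
    and D :: nat and E :: "nat \<Rightarrow> real" and P :: "nat \<Rightarrow> complex^'n^'n"
    and \<rho>0 :: "complex^'n^'n" and hbar \<sigma> :: real
    and M :: "'a measure" and B :: "real \<Rightarrow> 'a \<Rightarrow> real" and H :: "'a \<Rightarrow> real"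
    and p :: "nat \<Rightarrow> real" and \<xi> :: "real \<Rightarrow> 'a \<Rightarrow> real"
    and K \<rho> :: "real \<Rightarrow> 'a \<Rightarrow> complex^'n^'n" and \<Phi> :: "nat \<Rightarrow> nat \<Rightarrow> real \<Rightarrow> 'a \<Rightarrow> real"
    and t :: real
  assumes herm: "hermitian_mat Hop"
    and distinct: "inj_on E {1..D}"
    and proj: "\<And>r. r \<in> {1..D} \<Longrightarrow> orth_proj (P r) \<and> P r \<noteq> 0"
    and orth: "\<And>r s. r \<in> {1..D} \<Longrightarrow> s \<in> {1..D} \<Longrightarrow> r \<noteq> s \<Longrightarrow> P r ** P s = 0"
    and complete: "(\<Sum>r=1..D. P r) = mat 1"
    and spectral: "Hop = (\<Sum>r=1..D. cscale (complex_of_real (E r)) (P r))"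
    and dens: "density_matrix \<rho>0"
    and p_def: "\<And>r. p r = Re (trace (\<rho>0 ** P r))"
    and hbar: "hbar > 0" and sigma: "\<sigma> > 0"
    and PS: "prob_space M"
    and BM: "std_brownian_motion M B"
    and Hrv: "H \<in> borel_measurable M"
    and indep: "prob_space.indep_set M {H -` A \<inter> space M | A. A \<in> sets borel}
                  (sets (sigma (space M) {B s -` A \<inter> space M | s A. s \<ge> 0 \<and> A \<in> sets borel}))"
    and Hdist: "\<And>r. r \<in> {1..D} \<Longrightarrow> measure M {\<omega> \<in> space M. H \<omega> = E r} = p r"
    and xi_def: "\<And>s \<omega>. \<xi> s \<omega> = \<sigma> * s * H \<omega> + B s \<omega>"
    and K_def: "\<And>s \<omega>. K s \<omega> = mexp (cscale (- \<i> * complex_of_real (s / hbar)) Hop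
                     + cscale (complex_of_real (\<sigma> * \<xi> s \<omega> / 2)) Hop
                     - cscale (complex_of_real (\<sigma>\<^sup>2 * s / 4)) (Hop ** Hop))"
    and rho_def: "\<And>s \<omega>. \<rho> s \<omega> = cscale (1 / trace (K s \<omega> ** \<rho>0 ** adjoint_mat (K s \<omega>)))
                     (K s \<omega> ** \<rho>0 ** adjoint_mat (K s \<omega>))"
    and Phi_def: "\<And>n m s \<omega>. \<Phi> n m s \<omega> =
        exp (\<sigma> * (E n + E m) * \<xi> s \<omega> / 2 - \<sigma>\<^sup>2 * (E n + E m)\<^sup>2 * s / 8)
        / (\<Sum>r=1..D. p r * exp (\<sigma> * E r * \<xi> s \<omega> - \<sigma>\<^sup>2 * (E r)\<^sup>2 * s / 2))
        * exp (- \<sigma>\<^sup>2 * (E n - E m)\<^sup>2 * s / 8)"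
    and t: "t \<ge> 0"
  shows "AE \<omega> in M. \<rho> t \<omega> =
     (\<Sum>n\<in>{n\<in>{1..D}. p n > 0}.
        cscale (complex_of_real (real_cond_exp M (gen_filtration M \<xi> t)
                   (\<lambda>\<omega>'. indicator {\<omega>'' \<in> space M. H \<omega>'' = E n} \<omega>') \<omega>) / trace (\<rho>0 ** P n))
          (P n ** \<rho>0 ** P n))
   + (\<Sum>n=1..D. \<Sum>m\<in>{1..D} - {n}.
        cscale (exp (- \<i> * complex_of_real ((E n - E m) * t / hbar)) * complex_of_real (\<Phi> n m t \<omega>))
          (P n ** \<rho>0 ** P m))"
proof -
  have spectral_family: "spectral_family D P"
    using proj orth complete by unfold_locales
  interpret spectral_family D P
    by (rule spectral_family)
  have "(\<Sum>r=1..D. p r) = 1"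
    using density_matrix_trace_proj_sum[OF dens] by (simp add: p_def)
  then interpret energy_observation D E p \<sigma> M B H \<xi> t
    using distinct BM Hrv indep Hdist xi_def t by unfold_locales
  have "AE \<omega> in M. \<forall>n\<in>{1..D}. real_cond_exp M (gen_filtration M \<xi> t) (indicator (eigen_event n)) \<omega> =
          posterior n (\<xi> t \<omega>)"
    by (intro AE_finite_allI real_cond_exp_eigen_event) simp
  then show ?thesis
    by (rule eventually_mono)
       (simp only: rho_def normalized_evolution_expansion[OF spectral_family spectral dens p_def K_def Phi_def],
        auto intro!: arg_cong2[where f = "(+)"] sum.cong arg_cong2[where f = cscale])
qed

end
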